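(* Let $d\ge3$ and let $C$ be a $d$-dimensional copula whose marginal $C^{1:d-1}$ is absolutely continuous. Then $\mu_C$ is singular with respect to $\lambda_d$ if and only if there exists $\Lambda\in\mathcal{B}(\mathbb{I}^{d-1})$ with $\mu_{C^{1:d-1}}(\Lambda)=1$ such that $K_C(\mathbf{x},\cdot)$ is singular with respect to $\lambda$ for every $\mathbf{x}\in\Lambda$.
   Context: $\mathbb{I}=[0,1]$; $\lambda_m$ is Lebesgue measure on $\mathbb{I}^m$, $\lambda=\lambda_1$. $\mu_C$ is the probability measure with distribution function $C$; $C^{1:d-1}(\mathbf{x})=C(\mathbf{x},1)$ with measure $\mu_{C^{1:d-1}}$. $K_C:\mathbb{I}^{d-1}\times\mathcal{B}(\mathbb{I})\to\mathbb{I}$ is (a version of) the $(d-1)$-Markov kernel of $C$, i.e. a regular conditional distribution of $Y$ given $\mathbf{X}$ where $(\mathbf{X},Y)$ has distribution function $C$. A finite measure $\vartheta$ on $\mathcal{B}(\mathbb{I}^m)$ is singular if there is $G$ with $\vartheta(G)=\vartheta(\mathbb{I}^m)$ and $\lambda_m(G)=0$. *)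

theory Defs
  imports "HOL-Analysis.Analysis" "HOL-Probability.Probability"
begin

text \<open>Points of the unit cube I^d are represented as pairs (x, y) with
  x :: real^'n (the first d-1 coordinates, d - 1 = CARD('n)) and y :: real
  (the last coordinate).\<close>

definition unit_cube :: "(real^'n) set" where
  "unit_cube = {x. \<forall>i. 0 \<le> x $ i \<and> x $ i \<le> 1}"

definition copula_measure :: "((real^'n) \<times> real) measure \<Rightarrow> bool" where
  "copula_measure M \<longleftrightarrow>
     sets M = sets borel \<and> prob_space M \<and>
     measure M (unit_cube \<times> {0..1}) = 1 \<and>
     (\<forall>i. \<forall>t\<in>{0..1}. measure M {z. fst z $ i \<le> t} = t) \<and>
     (\<forall>t\<in>{0..1}. measure M {z. snd z \<le> t} = t)"

definition is_dist_fun_of :: "((real^'n) \<Rightarrow> real \<Rightarrow> real) \<Rightarrow> ((real^'n) \<times> real) measure \<Rightarrow> bool" where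
  "is_dist_fun_of C M \<longleftrightarrow>
     (\<forall>x\<in>unit_cube. \<forall>y\<in>{0..1}. C x y = measure M ({..x} \<times> {..y}))"

definition marg :: "((real^'n) \<times> real) measure \<Rightarrow> (real^'n) measure" where
  "marg M = distr M borel fst"

definition markov_kernel_of :: "((real^'n) \<times> real) measure \<Rightarrow> ((real^'n) \<Rightarrow> real measure) \<Rightarrow> bool" where
  "markov_kernel_of M K \<longleftrightarrow>
     K \<in> borel \<rightarrow>\<^sub>M prob_algebra borel \<and>
     (\<forall>x\<in>unit_cube. emeasure (K x) {0..1} = 1) \<and>
     (\<forall>A\<in>sets borel. \<forall>B\<in>sets borel.
        emeasure M (A \<times> B) = (\<integral>\<^sup>+x. indicator A x * emeasure (K x) B \<partial>marg M))"

definition singular_leb :: "'a::euclidean_space measure \<Rightarrow> bool" where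
  "singular_leb \<nu> \<longleftrightarrow>
     (\<exists>G\<in>sets borel. emeasure \<nu> G = emeasure \<nu> (space \<nu>) \<and> emeasure lborel G = 0)"

end

theory Submission
  imports Defs
begin

(* Disintegrate mu_C as the semidirect product of its marginal mu_{C^{1:d-1}} and the kernel K_C.

   If mu_C is concentrated on a lambda_d-null set G, then by Fubini almost every section G_x is
   lambda-null; absolute continuity of the marginal upgrades "lambda-almost every x" to
   "mu_{C^{1:d-1}}-almost every x", and the disintegration forces K_C(x, G_x) = 1 for almost every x.

   Conversely, let G be a lambda_d-null set of maximal mu_C-measure and E its complement, so that
   mu_C restricted to E has a Lebesgue density f, while the marginal has a Lebesgue density g.
   Comparing both descriptions on rectangles shows that for almost every x the measure
   g(x) K_C(x, E_x \<inter> .) has Lebesgue density f(x, .). When K_C(x, .) is singular this measure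
   must vanish, hence mu_C(E) = 0 and mu_C is singular. *)

lemma sets_borel_prod_borel:
  "sets (borel \<Otimes>\<^sub>M borel) =
    sets (borel :: ('a::second_countable_topology \<times> 'b::second_countable_topology) measure)"
  by (simp only: borel_prod)

lemma Times_in_sets_borel:
  fixes A :: "'a::second_countable_topology set" and B :: "'b::second_countable_topology set"
  assumes "A \<in> sets borel" "B \<in> sets borel"
  shows "A \<times> B \<in> sets borel"
  using pair_measureI[OF assms] by (simp add: sets_borel_prod_borel)

lemma Pair_vimage_in_sets_borel:
  fixes G :: "('a::second_countable_topology \<times> 'b::second_countable_topology) set"
  assumes "G \<in> sets borel"
  shows "Pair x -` G \<in> sets borel"
  using sets_Pair1[of G borel borel] assms by (simp add: sets_borel_prod_borel)

lemma measurable_fst_borel: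
  "fst \<in> (borel :: ('a::second_countable_topology \<times> 'b::second_countable_topology) measure)
    \<rightarrow>\<^sub>M borel"
  using measurable_fst[of "borel :: 'a measure" "borel :: 'b measure"] by (simp add: borel_prod)

lemma measurable_emeasure_Pair_vimage:
  fixes K :: "'a::second_countable_topology \<Rightarrow> 'b::second_countable_topology measure"
  assumes "K \<in> borel \<rightarrow>\<^sub>M subprob_algebra borel" "G \<in> sets borel"
  shows "(\<lambda>x. emeasure (K x) (Pair x -` G)) \<in> borel_measurable borel"
proof -
  have "(SIGMA x:space borel. Pair x -` G) = G" by auto
  with assms(2) have "(SIGMA x:space borel. Pair x -` G) \<in> sets (borel \<Otimes>\<^sub>M borel)"
    by (simp add: sets_borel_prod_borel)
  from emeasure_measurable_subprob_algebra2[OF this assms(1)] show ?thesis by simp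
qed

lemma measurable_emeasure_Pair_vimage_Int:
  fixes K :: "'a::second_countable_topology \<Rightarrow> 'b::second_countable_topology measure"
  assumes "K \<in> borel \<rightarrow>\<^sub>M subprob_algebra borel" "E \<in> sets borel" "B \<in> sets borel"
  shows "(\<lambda>x. emeasure (K x) (Pair x -` E \<inter> B)) \<in> borel_measurable borel"
proof -
  have "(\<lambda>x. emeasure (K x) (Pair x -` (E \<inter> UNIV \<times> B))) \<in> borel_measurable borel"
    using assms by (intro measurable_emeasure_Pair_vimage sets.Int Times_in_sets_borel) auto
  moreover have "Pair x -` (E \<inter> UNIV \<times> B) = Pair x -` E \<inter> B" for x
    by auto
  ultimately show ?thesis
    by simp
qed

lemma AE_lborel_Pair_vimage_null:
  fixes G :: "('a::euclidean_space \<times> 'b::euclidean_space) set"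
  assumes "G \<in> null_sets lborel"
  shows "AE x in lborel. emeasure lborel (Pair x -` G) = 0"
proof -
  have G: "G \<in> sets (lborel \<Otimes>\<^sub>M lborel)"
    unfolding lborel_prod using assms by auto
  have "(\<integral>\<^sup>+x. emeasure lborel (Pair x -` G) \<partial>lborel) = emeasure lborel G"
    using lborel.emeasure_pair_measure_alt[OF G] by (simp add: lborel_prod)
  also have "\<dots> = 0" using assms by auto
  finally show ?thesis
    using lborel.measurable_emeasure_Pair[OF G] by (simp add: nn_integral_0_iff_AE)
qed

lemma emeasure_density_lborel_Times:
  fixes f :: "'a::euclidean_space \<times> 'b::euclidean_space \<Rightarrow> ennreal"
  assumes f: "f \<in> borel_measurable borel" and A: "A \<in> sets borel" and B: "B \<in> sets borel"
  shows "emeasure (density lborel f) (A \<times> B) =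
    (\<integral>\<^sup>+x. emeasure (density lborel (\<lambda>y. f (x, y))) B * indicator A x \<partial>lborel)"
proof -
  have [measurable]: "f \<in> borel_measurable (lborel \<Otimes>\<^sub>M lborel)"
      "A \<times> B \<in> sets (lborel \<Otimes>\<^sub>M lborel)" "B \<in> sets borel"
    using f A B by (simp_all add: lborel_prod Times_in_sets_borel)
  have "emeasure (density lborel f) (A \<times> B) =
      (\<integral>\<^sup>+z. f z * indicator (A \<times> B) z \<partial>(lborel \<Otimes>\<^sub>M lborel))"
    using f A B by (simp add: emeasure_density lborel_prod Times_in_sets_borel)
  also have "\<dots> = (\<integral>\<^sup>+x. \<integral>\<^sup>+y. f (x, y) * indicator (A \<times> B) (x, y) \<partial>lborel \<partial>lborel)"
    by (rule lborel.nn_integral_fst[symmetric]) measurable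
  also have "\<dots> = (\<integral>\<^sup>+x. (\<integral>\<^sup>+y. f (x, y) * indicator B y \<partial>lborel) * indicator A x \<partial>lborel)"
  proof (rule nn_integral_cong)
    fix x
    have "(\<integral>\<^sup>+y. f (x, y) * indicator (A \<times> B) (x, y) \<partial>lborel) =
        (\<integral>\<^sup>+y. (f (x, y) * indicator B y) * indicator A x \<partial>lborel)"
      by (intro nn_integral_cong) (simp add: indicator_times mult_ac)
    also have "\<dots> = (\<integral>\<^sup>+y. f (x, y) * indicator B y \<partial>lborel) * indicator A x"
      by (rule nn_integral_multc) measurable
    finally show "(\<integral>\<^sup>+y. f (x, y) * indicator (A \<times> B) (x, y) \<partial>lborel) =
        (\<integral>\<^sup>+y. f (x, y) * indicator B y \<partial>lborel) * indicator A x" .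
  qed
  finally show ?thesis
    using B by (simp add: emeasure_density)
qed

lemma measurable_emeasure_density_lborel_Pair:
  fixes f :: "'a::euclidean_space \<times> 'b::euclidean_space \<Rightarrow> ennreal"
  assumes "f \<in> borel_measurable borel" "B \<in> sets borel"
  shows "(\<lambda>x. emeasure (density lborel (\<lambda>y. f (x, y))) B) \<in> borel_measurable borel"
proof -
  have [measurable]: "B \<in> sets borel" "f \<in> borel_measurable (lborel \<Otimes>\<^sub>M lborel)"
    using assms by (simp_all add: lborel_prod)
  have "(\<lambda>z. f z * indicator B (snd z)) \<in> borel_measurable (lborel \<Otimes>\<^sub>M lborel)"
    by measurable
  from lborel.borel_measurable_nn_integral_fst[OF this] show ?thesis
    by (simp add: emeasure_density)
qed

lemma emeasure_density_cmult_indicator: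
  assumes "S \<in> sets \<nu>" "B \<in> sets \<nu>"
  shows "emeasure (density \<nu> (\<lambda>y. c * indicator S y)) B = c * emeasure \<nu> (S \<inter> B)"
proof -
  have "emeasure (density \<nu> (\<lambda>y. c * indicator S y)) B = (\<integral>\<^sup>+y. c * indicator (S \<inter> B) y \<partial>\<nu>)"
    using assms by (simp add: emeasure_density indicator_inter_arith mult.assoc)
  also have "\<dots> = c * emeasure \<nu> (S \<inter> B)"
    using assms by (simp add: nn_integral_cmult_indicator)
  finally show ?thesis .
qed

section \<open>Measures singular to Lebesgue measure\<close>

lemma singular_leb_iff_compl_null:
  fixes \<nu> :: "'a::euclidean_space measure"
  assumes "finite_measure \<nu>" "sets \<nu> = sets borel"
  shows "singular_leb \<nu> \<longleftrightarrow> (\<exists>G \<in> null_sets lborel. emeasure \<nu> (- G) = 0)"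
proof -
  interpret finite_measure \<nu> by fact
  have space: "space \<nu> = UNIV" using sets_eq_imp_space_eq[OF assms(2)] by simp
  have "emeasure \<nu> G = emeasure \<nu> (space \<nu>) \<longleftrightarrow> emeasure \<nu> (- G) = 0"
    if "G \<in> sets borel" for G
  proof -
    have "emeasure \<nu> (- G) = emeasure \<nu> (space \<nu>) - emeasure \<nu> G"
      using that assms(2) space emeasure_compl[of G \<nu>] by (simp add: Compl_eq_Diff_UNIV)
    then show ?thesis
      using emeasure_space[of \<nu> G] by (auto simp: emeasure_eq_measure ennreal_minus measure_nonneg)
  qed
  then show ?thesis
    unfolding singular_leb_def by (auto simp: null_sets_def)
qed

lemma nn_integral_eq_0_if_density_singular_leb_eq_density_lborel:
  fixes \<nu> :: "'a::euclidean_space measure"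
  assumes \<nu>: "finite_measure \<nu>" "sets \<nu> = sets borel" "singular_leb \<nu>"
    and h: "h \<in> borel_measurable borel" and k: "k \<in> borel_measurable borel"
    and eq: "density \<nu> h = density lborel k"
  shows "(\<integral>\<^sup>+y. h y \<partial>\<nu>) = 0"
proof -
  obtain G where G: "G \<in> null_sets lborel" "emeasure \<nu> (- G) = 0"
    using \<nu> singular_leb_iff_compl_null by blast
  have h_meas: "h \<in> borel_measurable \<nu>"
    using h by (simp add: measurable_cong_sets[OF \<nu>(2) refl])
  have "G \<in> null_sets (density \<nu> h)"
    unfolding eq using G(1) k absolutely_continuousI_density[of k lborel]
    by (auto simp: absolutely_continuous_def)
  moreover have "- G \<in> null_sets \<nu>"
    using G null_setsD2[OF G(1)] \<nu>(2) by (simp add: null_setsI borel_comp)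
  then have "- G \<in> null_sets (density \<nu> h)"
    using absolutely_continuousI_density[OF h_meas] by (auto simp: absolutely_continuous_def)
  ultimately have "emeasure (density \<nu> h) (G \<union> - G) = 0"
    by (metis null_sets.Un null_setsD1)
  then show ?thesis
    using sets_eq_imp_space_eq[OF \<nu>(2)] sets.top[of \<nu>] emeasure_density[OF h_meas, of UNIV]
    by simp
qed

lemma (in finite_measure) ex_maximal_null_set:
  assumes sets_eq: "sets N = sets M"
  shows "\<exists>G\<in>null_sets N. \<forall>H\<in>null_sets N. emeasure M (H - G) = 0"
proof -
  have "emeasure M ` null_sets N \<noteq> {}"
    using null_sets.empty_sets by blast
  from ennreal_Sup_countable_SUP[OF this] obtain f :: "nat \<Rightarrow> ennreal"
    where f: "range f \<subseteq> emeasure M ` null_sets N" "Sup (emeasure M ` null_sets N) = (SUP i. f i)"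
    by metis
  then have "\<forall>i. \<exists>G. G \<in> null_sets N \<and> f i = emeasure M G"
    by blast
  then obtain Gs where Gs: "\<And>i. Gs i \<in> null_sets N" "\<And>i. f i = emeasure M (Gs i)"
    by metis
  define G where "G = (\<Union>i. Gs i)"
  have G: "G \<in> null_sets N"
    unfolding G_def using Gs(1) by blast
  have sets_null: "A \<in> sets M" if "A \<in> null_sets N" for A
    using that sets_eq by auto
  have "emeasure M (H - G) = 0" if H: "H \<in> null_sets N" for H
  proof -
    have "emeasure M (G \<union> H) \<le> Sup (emeasure M ` null_sets N)"
      using G H by (intro Sup_upper imageI null_sets.Un)
    also have "\<dots> \<le> emeasure M G"
      unfolding f(2) Gs(2)
      by (intro SUP_least emeasure_mono sets_null[OF G]) (auto simp: G_def)
    also have "emeasure M (G \<union> H) = emeasure M G + emeasure M (H - G)"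
      using plus_emeasure[of G M "H - G"] sets_null[OF G] sets_null[OF H] by (simp add: Un_Diff_cancel)
    finally have "emeasure M G + emeasure M (H - G) \<le> emeasure M G + 0"
      by simp
    then show ?thesis
      by (simp add: ennreal_add_left_cancel_le emeasure_finite)
  qed
  with G show ?thesis
    by blast
qed

(* The Lebesgue decomposition of M with respect to N: M restricted to G is the N-singular part. *)
lemma (in finite_measure) ex_null_set_absolutely_continuous_restricted:
  assumes sets_eq: "sets N = sets M"
  shows "\<exists>G\<in>null_sets N. absolutely_continuous N (density M (indicator (space M - G)))"
proof -
  obtain G where G: "G \<in> null_sets N" and maximal: "\<forall>H\<in>null_sets N. emeasure M (H - G) = 0"
    using ex_maximal_null_set[OF sets_eq] by blast
  have G_sets: "G \<in> sets M"
    using null_setsD2[OF G] sets_eq by simp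
  have "H \<in> null_sets (density M (indicator (space M - G)))" if H: "H \<in> null_sets N" for H
  proof -
    have H_sets: "H \<in> sets M"
      using null_setsD2[OF H] sets_eq by simp
    then have "emeasure (density M (indicator (space M - G))) H = emeasure M ((space M - G) \<inter> H)"
      using G_sets by (intro emeasure_restricted) auto
    also have "(space M - G) \<inter> H = H - G"
      using sets.sets_into_space[OF H_sets] by auto
    finally have "emeasure (density M (indicator (space M - G))) H = 0"
      using maximal H by simp
    then show ?thesis
      using H_sets by (intro null_setsI) simp_all
  qed
  with G show ?thesis
    unfolding absolutely_continuous_def by blast
qed

section \<open>Kernels that agree on rectangles\<close>

lemma sets_borel_eq_sigma_greaterThan_Rats:
  "sets borel = sigma_sets UNIV (greaterThan ` \<rat> :: real set set)"
proof -
  have "borel = sigma UNIV (greaterThan ` \<rat> :: real set set)"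
  proof (rule borel_eq_sigmaI1[OF borel_Ioi])
    fix X :: "real set" assume "X \<in> range greaterThan"
    then obtain t where X: "X = {t<..}" by auto
    have "X = (\<Union>q\<in>{q\<in>\<rat>. t < q}. {q<..})"
    proof (intro equalityI subsetI)
      fix x assume "x \<in> X"
      then obtain q where "q \<in> \<rat>" "t < q" "q < x"
        using Rats_dense_in_real[of t x] X by auto
      then show "x \<in> (\<Union>q\<in>{q\<in>\<rat>. t < q}. {q<..})" by auto
    qed (auto simp: X)
    also have "\<dots> \<in> sets (sigma UNIV (greaterThan ` \<rat>))"
    proof (rule sets.countable_UN')
      show "countable {q \<in> \<rat>. t < q}"
        by (rule countable_subset[OF _ countable_rat]) blast
      show "greaterThan ` {q \<in> \<rat>. t < q} \<subseteq> sets (sigma UNIV (greaterThan ` \<rat>))"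
        by (auto simp del: sets_measure_of_conv)
    qed
    finally show "X \<in> sets (sigma UNIV (greaterThan ` \<rat>))" .
  qed simp
  then have "sets borel = sets (sigma UNIV (greaterThan ` \<rat> :: real set set))"
    by simp
  also have "\<dots> = sigma_sets UNIV (greaterThan ` \<rat>)"
    by (rule sets_measure_of) simp
  finally show ?thesis .
qed

lemma measure_eqI_greaterThan_Rats:
  fixes M N :: "real measure"
  assumes sets: "sets M = sets borel" "sets N = sets borel"
    and finite: "emeasure M UNIV \<noteq> \<infinity>"
    and eq: "\<And>q. q \<in> \<rat> \<Longrightarrow> emeasure M {q<..} = emeasure N {q<..}"
  shows "M = N"
proof (rule measure_eqI_generator_eq_countable[where A = "greaterThan ` \<rat>" and E = "greaterThan ` \<rat>"])
  show "Int_stable (greaterThan ` \<rat> :: real set set)"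
  proof (rule Int_stableI_image)
    fix a b :: real assume "a \<in> \<rat>" "b \<in> \<rat>"
    then show "\<exists>c\<in>\<rat>. {a<..} \<inter> {b<..} = {c<..}"
      by (intro bexI[of _ "max a b"]) (auto simp: max_def)
  qed
  show "emeasure M X \<noteq> \<infinity>" if "X \<in> greaterThan ` \<rat>" for X
    using emeasure_mono[of X UNIV M] finite sets(1) that by (auto simp: top_unique)
  show "\<Union> (greaterThan ` \<rat>) = (UNIV :: real set)"
    using Rats_no_bot_less by blast
  show "sets M = sigma_sets UNIV (greaterThan ` \<rat>)" "sets N = sigma_sets UNIV (greaterThan ` \<rat>)"
    using sets sets_borel_eq_sigma_greaterThan_Rats by simp_all
  show "countable (greaterThan ` \<rat> :: real set set)"
    by (rule countable_image[OF countable_rat])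
  show "greaterThan ` \<rat> \<subseteq> Pow (UNIV :: real set)"
    by simp
  show "greaterThan ` \<rat> \<subseteq> (greaterThan ` \<rat> :: real set set)"
    by simp
  show "emeasure M X = emeasure N X" if "X \<in> greaterThan ` \<rat>" for X
    using that eq by auto
qed

lemma AE_measure_eqI_kernel_rectangles:
  fixes \<mu> :: "'a measure" and \<nu>1 \<nu>2 :: "'a \<Rightarrow> real measure"
  assumes "sigma_finite_measure \<mu>"
    and sets: "\<And>x. sets (\<nu>1 x) = sets borel" "\<And>x. sets (\<nu>2 x) = sets borel"
    and meas: "\<And>B. B \<in> sets borel \<Longrightarrow> (\<lambda>x. emeasure (\<nu>1 x) B) \<in> borel_measurable \<mu>"
      "\<And>B. B \<in> sets borel \<Longrightarrow> (\<lambda>x. emeasure (\<nu>2 x) B) \<in> borel_measurable \<mu>"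
    and finite: "AE x in \<mu>. emeasure (\<nu>1 x) UNIV \<noteq> \<infinity>"
    and rect: "\<And>A B. A \<in> sets \<mu> \<Longrightarrow> B \<in> sets borel \<Longrightarrow>
      (\<integral>\<^sup>+x. emeasure (\<nu>1 x) B * indicator A x \<partial>\<mu>) =
        (\<integral>\<^sup>+x. emeasure (\<nu>2 x) B * indicator A x \<partial>\<mu>)"
  shows "AE x in \<mu>. \<nu>1 x = \<nu>2 x"
proof -
  interpret sigma_finite_measure \<mu> by fact
  have "AE x in \<mu>. emeasure (\<nu>1 x) B = emeasure (\<nu>2 x) B" if B: "B \<in> sets borel" for B
  proof -
    have "density \<mu> (\<lambda>x. emeasure (\<nu>1 x) B) = density \<mu> (\<lambda>x. emeasure (\<nu>2 x) B)"
      by (rule measure_eqI) (simp_all add: emeasure_density meas B rect)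
    then show ?thesis
      using density_unique_iff meas B by blast
  qed
  \<comment> \<open>Only countably many exceptional null sets may be collected, hence the rational generators.\<close>
  then have "AE x in \<mu>. \<forall>q\<in>\<rat>. emeasure (\<nu>1 x) {q<..} = emeasure (\<nu>2 x) {q<..}"
    by (subst AE_ball_countable[OF countable_rat]) simp
  with finite show ?thesis
    by eventually_elim (rule measure_eqI_greaterThan_Rats; simp add: sets)
qed

section \<open>Semidirect products\<close>

definition semidirect_product ::
    "'a::topological_space measure \<Rightarrow> ('a \<Rightarrow> 'b::topological_space measure) \<Rightarrow> ('a \<times> 'b) measure"
  where "semidirect_product N K = N \<bind> (\<lambda>x. distr (K x) borel (Pair x))"

context
  fixes N :: "'a::second_countable_topology measure"
    and K :: "'a \<Rightarrow> 'b::second_countable_topology measure"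
  assumes sets_N: "sets N = sets borel"
    and kernel: "K \<in> borel \<rightarrow>\<^sub>M subprob_algebra borel"
begin

lemma measurable_distr_Pair_kernel:
  "(\<lambda>x. distr (K x) borel (Pair x)) \<in> N \<rightarrow>\<^sub>M subprob_algebra borel"
proof (rule measurable_distr2)
  show "K \<in> N \<rightarrow>\<^sub>M subprob_algebra borel"
    using kernel by (simp add: measurable_cong_sets[OF sets_N refl])
  have "sets (N \<Otimes>\<^sub>M borel) = sets (borel :: ('a \<times> 'b) measure)"
    using sets_pair_measure_cong[OF sets_N refl] sets_borel_prod_borel by metis
  then show "(\<lambda>(x, y). (x, y)) \<in> N \<Otimes>\<^sub>M borel \<rightarrow>\<^sub>M (borel :: ('a \<times> 'b) measure)"
    using measurable_ident_sets by (simp add: id_def)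
qed

lemma sets_semidirect_product: "sets (semidirect_product N K) = sets borel"
  unfolding semidirect_product_def
  using sets_eq_imp_space_eq[OF sets_N] by (intro sets_bind) auto

lemma emeasure_semidirect_product:
  assumes "E \<in> sets borel"
  shows "emeasure (semidirect_product N K) E = (\<integral>\<^sup>+x. emeasure (K x) (Pair x -` E) \<partial>N)"
  unfolding semidirect_product_def
proof (subst emeasure_bind[OF _ measurable_distr_Pair_kernel])
  show "(\<integral>\<^sup>+x. emeasure (distr (K x) borel (Pair x)) E \<partial>N) =
      (\<integral>\<^sup>+x. emeasure (K x) (Pair x -` E) \<partial>N)"
  proof (rule nn_integral_cong)
    fix x
    have sets_K: "sets (K x) = sets borel"
      using measurable_space[OF kernel] by (simp add: space_subprob_algebra)
    have "Pair x \<in> borel \<rightarrow>\<^sub>M (borel :: ('a \<times> 'b) measure)"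
      using measurable_Pair1'[of x "borel :: 'a measure" "borel :: 'b measure"]
      unfolding borel_prod by simp
    then have "Pair x \<in> K x \<rightarrow>\<^sub>M borel"
      by (simp only: measurable_cong_sets[OF sets_K refl])
    then show "emeasure (distr (K x) borel (Pair x)) E = emeasure (K x) (Pair x -` E)"
      using assms sets_eq_imp_space_eq[OF sets_K] by (simp add: emeasure_distr)
  qed
qed (use assms sets_eq_imp_space_eq[OF sets_N] in auto)

lemma emeasure_semidirect_product_Int_Times:
  assumes "E \<in> sets borel" "A \<in> sets borel" "B \<in> sets borel"
  shows "emeasure (semidirect_product N K) (E \<inter> A \<times> B) =
    (\<integral>\<^sup>+x. emeasure (K x) (Pair x -` E \<inter> B) * indicator A x \<partial>N)"
proof -
  have "E \<inter> A \<times> B \<in> sets borel"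
    using assms by (intro sets.Int Times_in_sets_borel)
  then have "emeasure (semidirect_product N K) (E \<inter> A \<times> B) =
      (\<integral>\<^sup>+x. emeasure (K x) (Pair x -` (E \<inter> A \<times> B)) \<partial>N)"
    by (rule emeasure_semidirect_product)
  also have "\<dots> = (\<integral>\<^sup>+x. emeasure (K x) (Pair x -` E \<inter> B) * indicator A x \<partial>N)"
    by (intro nn_integral_cong) (simp add: indicator_def vimage_Int)
  finally show ?thesis .
qed

lemma semidirect_product_eqI:
  fixes M :: "('a \<times> 'b) measure"
  assumes sets_M: "sets M = sets borel" and finite: "emeasure M UNIV \<noteq> \<infinity>"
    and rect: "\<And>A B. A \<in> sets borel \<Longrightarrow> B \<in> sets borel \<Longrightarrow>
      emeasure M (A \<times> B) = (\<integral>\<^sup>+x. indicator A x * emeasure (K x) B \<partial>N)"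
  shows "M = semidirect_product N K"
proof -
  let ?R = "{A \<times> B | A B. A \<in> sets (borel :: 'a measure) \<and> B \<in> sets (borel :: 'b measure)}"
  have sigma_R: "sets (borel :: ('a \<times> 'b) measure) = sigma_sets UNIV ?R"
    using sets_pair_measure[of "borel :: 'a measure" "borel :: 'b measure"]
    by (simp add: sets_borel_prod_borel)
  show ?thesis
  proof (rule measure_eqI_generator_eq[where E = ?R and \<Omega> = UNIV and A = "\<lambda>_. UNIV"])
    show "Int_stable ?R"
      using Int_stable_pair_measure_generator[of "borel :: 'a measure" "borel :: 'b measure"] by simp
    show "sets M = sigma_sets UNIV ?R" "sets (semidirect_product N K) = sigma_sets UNIV ?R"
      using sets_M sets_semidirect_product sigma_R by simp_all
    show "range (\<lambda>_. UNIV) \<subseteq> ?R"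
      by (auto intro!: exI[of _ UNIV])
    fix X assume "X \<in> ?R"
    then obtain A B where X: "X = A \<times> B" "A \<in> sets borel" "B \<in> sets borel" by auto
    then show "emeasure M X = emeasure (semidirect_product N K) X"
      using rect emeasure_semidirect_product_Int_Times[of UNIV A B] by (simp add: mult.commute)
  qed (use finite in auto)
qed

end

section \<open>Disintegration of a copula measure\<close>

lemma unit_cube_eq_cbox: "unit_cube = cbox (0::real^'n) 1"
  by (auto simp: unit_cube_def mem_box_cart)

lemma sets_borel_unit_cube [measurable]: "(unit_cube :: (real^'n) set) \<in> sets borel"
  unfolding unit_cube_eq_cbox by simp

lemma sets_marg [simp]: "sets (marg M) = sets borel"
  by (simp add: marg_def)

lemma prob_space_marg:
  assumes "sets M = sets borel" "prob_space M"
  shows "prob_space (marg M)"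
  unfolding marg_def using assms
  by (intro prob_space.prob_space_distr)
    (simp_all add: measurable_cong_sets[OF assms(1) refl] measurable_fst_borel)

lemma (in prob_space) AE_iff_ex_prob_1_subset:
  assumes "C \<in> events" "prob C = 1"
  shows "(AE x in M. P x) \<longleftrightarrow> (\<exists>\<Lambda>\<in>events. \<Lambda> \<subseteq> C \<and> prob \<Lambda> = 1 \<and> (\<forall>x\<in>\<Lambda>. P x))"
proof
  assume "AE x in M. P x"
  then obtain N where N: "{x\<in>space M. \<not> P x} \<subseteq> N" "N \<in> null_sets M"
    by (metis AE_E null_setsI)
  have "prob (C - N) = 1"
    using assms N(2) by (simp add: measure_Diff_null_set)
  moreover have "\<forall>x\<in>C - N. P x"
    using N(1) sets.sets_into_space[OF assms(1)] by blast
  ultimately show "\<exists>\<Lambda>\<in>events. \<Lambda> \<subseteq> C \<and> prob \<Lambda> = 1 \<and> (\<forall>x\<in>\<Lambda>. P x)"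
    using assms(1) N(2) by (intro bexI[of _ "C - N"]) auto
next
  assume "\<exists>\<Lambda>\<in>events. \<Lambda> \<subseteq> C \<and> prob \<Lambda> = 1 \<and> (\<forall>x\<in>\<Lambda>. P x)"
  then obtain \<Lambda> where "prob \<Lambda> = 1" "\<forall>x\<in>\<Lambda>. P x" by blast
  from AE_prob_1[OF this(1)] show "AE x in M. P x"
    by eventually_elim (use \<open>\<forall>x\<in>\<Lambda>. P x\<close> in blast)
qed

lemma measure_marg_unit_cube:
  assumes "copula_measure M"
  shows "measure (marg M) unit_cube = 1"
proof -
  have sets_M: "sets M = sets borel" and "prob_space M"
    and cube: "measure M (unit_cube \<times> {0..1}) = 1"
    using assms by (simp_all add: copula_measure_def)
  interpret prob_space M by fact
  interpret marg: prob_space "marg M"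
    using prob_space_marg[OF sets_M \<open>prob_space M\<close>] .
  have "measure (marg M) unit_cube = measure M (unit_cube \<times> UNIV)"
    unfolding marg_def using sets_eq_imp_space_eq[OF sets_M]
    by (subst measure_distr) (auto simp: measurable_cong_sets[OF sets_M refl] measurable_fst_borel
      intro!: arg_cong[where f = "measure M"])
  also have "\<dots> \<ge> measure M (unit_cube \<times> {0..1})"
    using sets_M by (intro finite_measure_mono) (auto simp: Times_in_sets_borel)
  finally show ?thesis
    using cube marg.prob_le_1 by (simp add: antisym)
qed

lemma markov_kernel_ofD:
  assumes "markov_kernel_of M K"
  shows "K \<in> borel \<rightarrow>\<^sub>M subprob_algebra borel" "sets (K x) = sets borel" "prob_space (K x)"
proof -
  have K: "K \<in> borel \<rightarrow>\<^sub>M prob_algebra borel"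
    using assms by (simp add: markov_kernel_of_def)
  then show "K \<in> borel \<rightarrow>\<^sub>M subprob_algebra borel"
    by (rule measurable_prob_algebraD)
  have "K x \<in> space (prob_algebra borel)"
    using measurable_space[OF K] by simp
  then show "sets (K x) = sets borel" "prob_space (K x)"
    by (auto simp: space_prob_algebra)
qed

lemma semidirect_product_marg_markov_kernel:
  assumes sets_M: "sets M = sets borel" and "prob_space M" and kernel: "markov_kernel_of M K"
  shows "semidirect_product (marg M) K = M"
proof (rule semidirect_product_eqI[symmetric])
  show "K \<in> borel \<rightarrow>\<^sub>M subprob_algebra borel"
    using markov_kernel_ofD(1)[OF kernel] .
  show "emeasure M UNIV \<noteq> \<infinity>"
    using prob_space.emeasure_space_1[OF \<open>prob_space M\<close>] sets_eq_imp_space_eq[OF sets_M] by simp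
qed (use assms in \<open>simp_all add: markov_kernel_of_def\<close>)

lemma AE_markov_kernel_Pair_vimage_null:
  fixes M :: "((real^'n) \<times> real) measure" and K :: "(real^'n) \<Rightarrow> real measure"
  assumes sets_M: "sets M = sets borel" and "prob_space M" and kernel: "markov_kernel_of M K"
    and F: "F \<in> sets borel" "emeasure M F = 0"
  shows "AE x in marg M. emeasure (K x) (Pair x -` F) = 0"
proof -
  have "(\<integral>\<^sup>+x. emeasure (K x) (Pair x -` F) \<partial>marg M) = emeasure (semidirect_product (marg M) K) F"
    using F(1) by (intro emeasure_semidirect_product[symmetric] sets_marg markov_kernel_ofD(1)[OF kernel])
  also have "\<dots> = 0"
    using F(2) semidirect_product_marg_markov_kernel[OF sets_M \<open>prob_space M\<close> kernel] by simp
  finally have "(\<integral>\<^sup>+x. emeasure (K x) (Pair x -` F) \<partial>marg M) = 0" .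
  moreover have "(\<lambda>x. emeasure (K x) (Pair x -` F)) \<in> borel_measurable (marg M)"
    using measurable_emeasure_Pair_vimage[OF markov_kernel_ofD(1)[OF kernel] F(1)]
    by (simp add: measurable_cong_sets[OF sets_marg refl])
  ultimately show ?thesis
    by (simp add: nn_integral_0_iff_AE)
qed

lemma AE_singular_leb_kernel_if_singular_leb:
  fixes M :: "((real^'n) \<times> real) measure" and K :: "(real^'n) \<Rightarrow> real measure"
  assumes sets_M: "sets M = sets borel" and "prob_space M" and kernel: "markov_kernel_of M K"
    and ac: "absolutely_continuous lborel (marg M)" and "singular_leb M"
  shows "AE x in marg M. singular_leb (K x)"
proof -
  interpret prob_space M by fact
  obtain G where G: "G \<in> null_sets lborel" "emeasure M (- G) = 0"
    using \<open>singular_leb M\<close> singular_leb_iff_compl_null[OF finite_measure_axioms sets_M] by blast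
  have G_borel: "G \<in> sets borel"
    using G(1) by auto
  have "AE x in marg M. emeasure lborel (Pair x -` G) = 0"
    using AE_lborel_Pair_vimage_null[OF G(1)] by (intro absolutely_continuous_AE[OF _ ac]) simp_all
  moreover have "AE x in marg M. emeasure (K x) (Pair x -` (- G)) = 0"
    using G_borel G(2)
    by (intro AE_markov_kernel_Pair_vimage_null[OF sets_M \<open>prob_space M\<close> kernel]) (simp_all add: borel_comp)
  ultimately show ?thesis
  proof eventually_elim
    case (elim x)
    have "Pair x -` G \<in> null_sets lborel"
      using elim(1) Pair_vimage_in_sets_borel[OF G_borel] by (simp add: null_setsI)
    moreover have "finite_measure (K x)"
      using markov_kernel_ofD(3)[OF kernel] by (rule prob_space.finite_measure)
    ultimately show "singular_leb (K x)"
      using elim(2) singular_leb_iff_compl_null[of "K x"] markov_kernel_ofD(2)[OF kernel]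
      by (auto simp: vimage_Compl)
  qed
qed

lemma emeasure_Int_Times_markov_kernel:
  fixes M :: "((real^'n) \<times> real) measure" and K :: "(real^'n) \<Rightarrow> real measure"
  assumes sets_M: "sets M = sets borel" and "prob_space M" and kernel: "markov_kernel_of M K"
    and g: "g \<in> borel_measurable lborel" "density lborel g = marg M"
    and sets: "E \<in> sets borel" "A \<in> sets borel" "B \<in> sets borel"
  shows "emeasure M (E \<inter> A \<times> B) =
    (\<integral>\<^sup>+x. g x * emeasure (K x) (Pair x -` E \<inter> B) * indicator A x \<partial>lborel)"
proof -
  have K: "K \<in> borel \<rightarrow>\<^sub>M subprob_algebra borel"
    using markov_kernel_ofD(1)[OF kernel] .
  note [measurable] = measurable_emeasure_Pair_vimage_Int[OF K sets(1,3)] sets(2)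
  have "emeasure M (E \<inter> A \<times> B) = emeasure (semidirect_product (marg M) K) (E \<inter> A \<times> B)"
    using semidirect_product_marg_markov_kernel[OF sets_M \<open>prob_space M\<close> kernel] by simp
  also have "\<dots> = (\<integral>\<^sup>+x. emeasure (K x) (Pair x -` E \<inter> B) * indicator A x \<partial>density lborel g)"
    using emeasure_semidirect_product_Int_Times[OF sets_marg K sets] g(2) by simp
  also have "\<dots> = (\<integral>\<^sup>+x. g x * emeasure (K x) (Pair x -` E \<inter> B) * indicator A x \<partial>lborel)"
    by (subst nn_integral_density) (use g(1) in \<open>measurable, simp add: mult.assoc\<close>)
  finally show ?thesis .
qed

lemma AE_density_kernel_eq_density_lborel:
  fixes M :: "((real^'n) \<times> real) measure" and K :: "(real^'n) \<Rightarrow> real measure"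
  assumes sets_M: "sets M = sets borel" and "prob_space M" and kernel: "markov_kernel_of M K"
    and g: "g \<in> borel_measurable lborel" "density lborel g = marg M"
    and E: "E \<in> sets borel"
    and f: "f \<in> borel_measurable lborel" "density lborel f = density M (indicator E)"
  shows "AE x in lborel.
    density (K x) (\<lambda>y. g x * indicator (Pair x -` E) y) = density lborel (\<lambda>y. f (x, y))"
proof -
  define \<nu>1 where "\<nu>1 x = density (K x) (\<lambda>y. g x * indicator (Pair x -` E) y)" for x
  define \<nu>2 where "\<nu>2 x = density lborel (\<lambda>y. f (x, y))" for x
  have K: "K \<in> borel \<rightarrow>\<^sub>M subprob_algebra borel" "\<And>x. sets (K x) = sets borel"
      "\<And>x. finite_measure (K x)"
    using markov_kernel_ofD[OF kernel] prob_space.finite_measure by auto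
  have [measurable]: "g \<in> borel_measurable borel" "f \<in> borel_measurable borel"
    using f g by auto
  have \<nu>1_emeasure: "emeasure (\<nu>1 x) B = g x * emeasure (K x) (Pair x -` E \<inter> B)"
    if "B \<in> sets borel" for x B
    using that Pair_vimage_in_sets_borel[OF E]
    by (simp add: \<nu>1_def emeasure_density_cmult_indicator K(2))
  have g_finite: "AE x in lborel. g x \<noteq> \<infinity>"
    using sigma_finite_measure.sigma_finite_iff_density_finite[OF sigma_finite_lborel g(1)] g(2)
      prob_space_imp_sigma_finite[OF prob_space_marg[OF sets_M \<open>prob_space M\<close>]] by simp
  have "AE x in lborel. \<nu>1 x = \<nu>2 x"
  proof (rule AE_measure_eqI_kernel_rectangles)
    show "sigma_finite_measure (lborel :: (real^'n) measure)"
      by (rule sigma_finite_lborel)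
    show "sets (\<nu>1 x) = sets borel" "sets (\<nu>2 x) = sets borel" for x
      by (simp_all add: \<nu>1_def \<nu>2_def K(2))
    show "(\<lambda>x. emeasure (\<nu>1 x) B) \<in> borel_measurable lborel" if "B \<in> sets borel" for B
      using measurable_emeasure_Pair_vimage_Int[OF K(1) E that] by (simp add: \<nu>1_emeasure that)
    show "(\<lambda>x. emeasure (\<nu>2 x) B) \<in> borel_measurable lborel" if "B \<in> sets borel" for B
      using measurable_emeasure_density_lborel_Pair[of f B] f(1) that by (simp add: \<nu>2_def)
    show "AE x in lborel. emeasure (\<nu>1 x) UNIV \<noteq> \<infinity>"
      using g_finite
      by eventually_elim (simp add: \<nu>1_emeasure ennreal_mult_eq_top_iff finite_measure.emeasure_finite K(3))
    show "(\<integral>\<^sup>+x. emeasure (\<nu>1 x) B * indicator A x \<partial>lborel) =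
        (\<integral>\<^sup>+x. emeasure (\<nu>2 x) B * indicator A x \<partial>lborel)"
      if A: "A \<in> sets lborel" and B: "B \<in> sets borel" for A B
    proof -
      have A_borel: "A \<in> sets borel"
        using A by simp
      have "(\<integral>\<^sup>+x. emeasure (\<nu>1 x) B * indicator A x \<partial>lborel) = emeasure M (E \<inter> A \<times> B)"
        using emeasure_Int_Times_markov_kernel[OF sets_M \<open>prob_space M\<close> kernel g E A_borel B] B
        by (simp add: \<nu>1_emeasure)
      also have "\<dots> = emeasure (density lborel f) (A \<times> B)"
        using f(2) emeasure_restricted[of E M "A \<times> B"] sets_M E A_borel B
        by (simp add: Times_in_sets_borel)
      also have "\<dots> = (\<integral>\<^sup>+x. emeasure (\<nu>2 x) B * indicator A x \<partial>lborel)"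
        unfolding \<nu>2_def using A_borel B by (intro emeasure_density_lborel_Times) simp_all
      finally show ?thesis .
    qed
  qed
  then show ?thesis
    by (simp add: \<nu>1_def \<nu>2_def)
qed

lemma AE_kernel_section_null_if_AE_singular_leb:
  fixes M :: "((real^'n) \<times> real) measure" and K :: "(real^'n) \<Rightarrow> real measure"
  assumes sets_M: "sets M = sets borel" and "prob_space M" and kernel: "markov_kernel_of M K"
    and g: "g \<in> borel_measurable lborel" "density lborel g = marg M"
    and E: "E \<in> sets borel"
    and f: "f \<in> borel_measurable lborel" "density lborel f = density M (indicator E)"
    and sing: "AE x in marg M. singular_leb (K x)"
  shows "AE x in lborel. g x * emeasure (K x) (Pair x -` E) = 0"
proof -
  have [measurable]: "f \<in> borel_measurable borel"
    using f(1) by simp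
  have "AE x in lborel. 0 < g x \<longrightarrow> singular_leb (K x)"
    using sing unfolding g(2)[symmetric] AE_density[OF g(1)] .
  with AE_density_kernel_eq_density_lborel[OF sets_M \<open>prob_space M\<close> kernel g E f]
  show ?thesis
  proof eventually_elim
    case (elim x)
    show ?case
    proof (cases "g x = 0")
      case False
      have Kx: "finite_measure (K x)" "sets (K x) = sets borel"
        using markov_kernel_ofD(2,3)[OF kernel] prob_space.finite_measure by auto
      have [measurable]: "Pair x -` E \<in> sets borel"
        using E by (rule Pair_vimage_in_sets_borel)
      have "(\<integral>\<^sup>+y. g x * indicator (Pair x -` E) y \<partial>K x) = 0"
        using Kx elim False
        by (intro nn_integral_eq_0_if_density_singular_leb_eq_density_lborel)
          (auto simp: zero_less_iff_neq_zero)
      then show ?thesis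
        using Kx(2) by (simp add: nn_integral_cmult_indicator)
    qed simp
  qed
qed

lemma singular_leb_if_AE_singular_leb_kernel:
  fixes M :: "((real^'n) \<times> real) measure" and K :: "(real^'n) \<Rightarrow> real measure"
  assumes sets_M: "sets M = sets borel" and "prob_space M" and kernel: "markov_kernel_of M K"
    and ac: "absolutely_continuous lborel (marg M)" and sing: "AE x in marg M. singular_leb (K x)"
  shows "singular_leb M"
proof -
  interpret prob_space M by fact
  have "sets lborel = sets M"
    using sets_M by simp
  then obtain G where G: "G \<in> null_sets lborel"
    and ac_E: "absolutely_continuous lborel (density M (indicator (space M - G)))"
    using ex_null_set_absolutely_continuous_restricted by blast
  define E where "E = space M - G"
  have E: "E \<in> sets borel" "E = - G"
    using G sets_eq_imp_space_eq[OF sets_M] by (auto simp: E_def borel_comp)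
  have "sets (density M (indicator E)) = sets lborel"
    using sets_M by simp
  from sigma_finite_measure.Radon_Nikodym[OF sigma_finite_lborel ac_E[folded E_def] this]
  obtain f where f: "f \<in> borel_measurable lborel" "density lborel f = density M (indicator E)"
    by blast
  have "sets (marg M) = sets lborel"
    by simp
  from sigma_finite_measure.Radon_Nikodym[OF sigma_finite_lborel ac this]
  obtain g where g: "g \<in> borel_measurable lborel" "density lborel g = marg M"
    by blast
  have "emeasure M E = (\<integral>\<^sup>+x. emeasure (K x) (Pair x -` E) \<partial>marg M)"
    using emeasure_semidirect_product[OF sets_marg[of M] markov_kernel_ofD(1)[OF kernel] E(1)]
      semidirect_product_marg_markov_kernel[OF sets_M \<open>prob_space M\<close> kernel]
    by simp
  also have "\<dots> = (\<integral>\<^sup>+x. g x * emeasure (K x) (Pair x -` E) \<partial>lborel)"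
    unfolding g(2)[symmetric]
    using g(1) measurable_emeasure_Pair_vimage[OF markov_kernel_ofD(1)[OF kernel] E(1)]
    by (simp add: nn_integral_density)
  also have "\<dots> = (\<integral>\<^sup>+x. 0 \<partial>(lborel :: (real^'n) measure))"
    using AE_kernel_section_null_if_AE_singular_leb[OF sets_M \<open>prob_space M\<close> kernel g E(1) f sing]
    by (rule nn_integral_cong_AE)
  finally show ?thesis
    using G E(2) singular_leb_iff_compl_null[OF finite_measure_axioms sets_M] by auto
qed

theorem lemma5p9:
  fixes C :: "(real^'n) \<Rightarrow> real \<Rightarrow> real"
    and M :: "((real^'n) \<times> real) measure"
    and K :: "(real^'n) \<Rightarrow> real measure"
  assumes d3: "CARD('n) \<ge> 2"
    and copM: "copula_measure M"
    and CM: "is_dist_fun_of C M"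
    and ac: "absolutely_continuous lborel (marg M)"
    and kern: "markov_kernel_of M K"
  shows "singular_leb M \<longleftrightarrow>
     (\<exists>\<Lambda>\<in>sets borel. \<Lambda> \<subseteq> unit_cube \<and> measure (marg M) \<Lambda> = 1 \<and>
        (\<forall>x\<in>\<Lambda>. singular_leb (K x)))"
proof -
  have sets_M: "sets M = sets borel" and prob: "prob_space M"
    using copM by (simp_all add: copula_measure_def)
  interpret marg: prob_space "marg M"
    using prob_space_marg[OF sets_M prob] .
  have "singular_leb M \<longleftrightarrow> (AE x in marg M. singular_leb (K x))"
    using AE_singular_leb_kernel_if_singular_leb[OF sets_M prob kern ac]
      singular_leb_if_AE_singular_leb_kernel[OF sets_M prob kern ac] by blast
  also have "\<dots> \<longleftrightarrow> (\<exists>\<Lambda>\<in>sets borel. \<Lambda> \<subseteq> unit_cube \<and> measure (marg M) \<Lambda> = 1 \<and>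
      (\<forall>x\<in>\<Lambda>. singular_leb (K x)))"
    using marg.AE_iff_ex_prob_1_subset[OF _ measure_marg_unit_cube[OF copM]] by simp
  finally show ?thesis .
qed

end
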